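(* Let $n \geq 2$ be an integer and let $Q_{4n} = \langle a, b \mid a^{2n} = e,\ a^{n} = b^2,\ ab = ba^{-1} \rangle$ be the dicyclic group of order $4n$. Then the order supergraph $\mathcal{S}(Q_{4n})$ is cyclically separable if and only if $n$ is not a power of $2$.
   Context: All graphs are simple and undirected. For a finite group $G$, the order supergraph $\mathcal{S}(G)$ is the graph with vertex set $G$ in which two distinct vertices $x,y$ are adjacent if and only if the order of $x$ divides the order of $y$ or the order of $y$ divides the order of $x$. For a graph $\Gamma$, a vertex cutset is a set $S$ of vertices such that $\Gamma - S$ is disconnected; a cyclic vertex cutset is a vertex cutset $S$ such that $\Gamma - S$ has at least two connected components each of which contains a cycle. $\Gamma$ is called cyclically separable if it has a cyclic vertex cutset. *)

theory Defs
  imports "HOL-Algebra.Algebra"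
begin

text \<open>Concrete model: the pair (i, j) with i < 2n, j < 2 stands for the
  element a^i b^j of Q_{4n} = < a, b | a^{2n} = e, a^n = b^2, ab = b a^{-1} >.
  Multiplication rules: a^i a^k = a^{i+k}, a^i (a^k b) = a^{i+k} b,
  (a^i b) a^k = a^{i-k} b, (a^i b)(a^k b) = a^{i-k+n}, exponents mod 2n.\<close>

definition dicyclic_mult :: "nat \<Rightarrow> nat \<times> nat \<Rightarrow> nat \<times> nat \<Rightarrow> nat \<times> nat" where
  "dicyclic_mult n x y =
     (case x of (i, j) \<Rightarrow> case y of (k, l) \<Rightarrow>
        if j = 0 then ((i + k) mod (2 * n), l)
        else if l = 0 then ((i + 2 * n - k) mod (2 * n), 1)
        else ((i + 2 * n - k + n) mod (2 * n), 0))"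

definition dicyclic_group :: "nat \<Rightarrow> (nat \<times> nat) monoid" where
  "dicyclic_group n =
     \<lparr> carrier = {(i, j). i < 2 * n \<and> j < 2},
       monoid.mult = dicyclic_mult n,
       monoid.one = (0, 0) \<rparr>"

definition order_supergraph_adj :: "('a, 'b) monoid_scheme \<Rightarrow> 'a \<Rightarrow> 'a \<Rightarrow> bool" where
  "order_supergraph_adj G x y \<longleftrightarrow>
     x \<noteq> y \<and> (group.ord G x dvd group.ord G y \<or> group.ord G y dvd group.ord G x)"

definition reach :: "'a set \<Rightarrow> ('a \<Rightarrow> 'a \<Rightarrow> bool) \<Rightarrow> 'a \<Rightarrow> 'a \<Rightarrow> bool" where
  "reach V E = (\<lambda>u v. u \<in> V \<and> v \<in> V \<and> E u v)\<^sup>*\<^sup>*"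

definition components :: "'a set \<Rightarrow> ('a \<Rightarrow> 'a \<Rightarrow> bool) \<Rightarrow> 'a set set" where
  "components V E = {{y. reach V E x y} | x. x \<in> V}"

definition has_cycle :: "'a set \<Rightarrow> ('a \<Rightarrow> 'a \<Rightarrow> bool) \<Rightarrow> bool" where
  "has_cycle V E \<longleftrightarrow>
     (\<exists>xs. length xs \<ge> 3 \<and> distinct xs \<and> set xs \<subseteq> V \<and>
           (\<forall>i < length xs - 1. E (xs ! i) (xs ! Suc i)) \<and>
           E (last xs) (hd xs))"

definition cyclic_vertex_cutset :: "'a set \<Rightarrow> ('a \<Rightarrow> 'a \<Rightarrow> bool) \<Rightarrow> 'a set \<Rightarrow> bool" where
  "cyclic_vertex_cutset V E S \<longleftrightarrow> S \<subseteq> V \<and>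
     (\<exists>C1 C2. C1 \<in> components (V - S) E \<and> C2 \<in> components (V - S) E \<and> C1 \<noteq> C2 \<and>
              has_cycle C1 E \<and> has_cycle C2 E)"

definition cyclically_separable :: "'a set \<Rightarrow> ('a \<Rightarrow> 'a \<Rightarrow> bool) \<Rightarrow> bool" where
  "cyclically_separable V E \<longleftrightarrow> (\<exists>S. cyclic_vertex_cutset V E S)"

end

theory Submission
  imports Defs
begin

(* The elements a^i b have order 4, the elements a^i have order dividing 2n. If n = 2^k,
   every order divides |Q_4n| = 2^(k+2), so any two orders are comparable under
   divisibility and S(Q_4n) is complete, hence has no vertex cut at all. Otherwise
   n = m q with m > 1 odd. Then a^q, a^(2q), a^(4q) have orders 2m, m, m and b, ab, a^2 b
   have order 4; each triple is a triangle, and no order of the first triple is comparable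
   with 4. Deleting all other vertices leaves exactly these two triangles as components. *)

lemma dicyclic_mult_formula:
  assumes "i < 2 * n" "k < 2 * n" "j < 2" "l < 2"
  shows "dicyclic_mult n (i, j) (k, l) =
    (nat ((int i + ((-1) ^ j * int k + int n * int j * int l)) mod (2 * int n)), (j + l) mod 2)"
proof -
  have "int ((i + k) mod (2 * n)) = (int i + int k) mod (2 * int n)"
    and "int ((i + 2 * n - k) mod (2 * n)) = (int i - int k) mod (2 * int n)"
    and "int ((i + 2 * n - k + n) mod (2 * n)) = (int i + (int n - int k)) mod (2 * int n)"
    using assms(2) by (simp_all add: zmod_int mod_eq_dvd_iff)
  then show ?thesis
    using assms(3,4) by (auto simp: dicyclic_mult_def less_2_cases_iff dest!: arg_cong[where f = nat])
qed

lemma dicyclic_mult_assoc: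
  assumes "i < 2 * n" "k < 2 * n" "r < 2 * n" "j < 2" "l < 2" "s < 2"
  shows "dicyclic_mult n (dicyclic_mult n (i, j) (k, l)) (r, s) =
         dicyclic_mult n (i, j) (dicyclic_mult n (k, l) (r, s))"
proof -
  let ?N = "2 * int n"
  have "?N > 0" using assms(1) by simp
  then have bound: "nat (x mod ?N) < 2 * n" for x
    by (simp add: nat_less_iff)
  have congruent: "nat (x mod ?N) = nat (y mod ?N)" if "?N dvd x - y" for x y
  proof -
    have "x mod ?N = y mod ?N" using that by (simp add: mod_eq_dvd_iff)
    then show ?thesis by simp
  qed
  \<comment> \<open>Written out, the inner residues show that both sides differ by a multiple of 2n.\<close>
  have unfold_mod: "x mod ?N = x - ?N * (x div ?N)" for x
    using minus_mult_div_eq_mod[of x ?N] by simp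
  show ?thesis
    using assms \<open>?N > 0\<close>
    by (simp add: dicyclic_mult_formula bound)
       (auto simp: less_2_cases_iff intro!: congruent; simp only: unfold_mod; simp add: algebra_simps)
qed

lemma dicyclic_group_one [simp]: "\<one>\<^bsub>dicyclic_group n\<^esub> = (0, 0)"
  by (simp add: dicyclic_group_def)

lemma dicyclic_group_mult [simp]: "x \<otimes>\<^bsub>dicyclic_group n\<^esub> y = dicyclic_mult n x y"
  by (simp add: dicyclic_group_def)

lemma mem_dicyclic_group_carrier [simp]:
  "(i, j) \<in> carrier (dicyclic_group n) \<longleftrightarrow> i < 2 * n \<and> j < 2"
  by (simp add: dicyclic_group_def)

lemma group_dicyclic_group:
  assumes "n > 0"
  shows "group (dicyclic_group n)"
proof (rule groupI)
  let ?N = "2 * int n"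
  fix x assume "x \<in> carrier (dicyclic_group n)"
  then obtain i j where x: "x = (i, j)" "i < 2 * n" "j < 2"
    by (cases x) simp
  define y where "y = (nat ((- ((-1) ^ j * int i) - int n * int j) mod ?N), j)"
  have "y \<in> carrier (dicyclic_group n)"
    using assms x by (simp add: y_def nat_less_iff)
  moreover have "y \<otimes>\<^bsub>dicyclic_group n\<^esub> x = \<one>\<^bsub>dicyclic_group n\<^esub>"
    using assms x
    by (auto simp: y_def dicyclic_mult_formula nat_less_iff less_2_cases_iff mod_simps)
  ultimately show "\<exists>y \<in> carrier (dicyclic_group n). y \<otimes>\<^bsub>dicyclic_group n\<^esub> x = \<one>\<^bsub>dicyclic_group n\<^esub>"
    by blast
next
  fix x y z
  assume "x \<in> carrier (dicyclic_group n)" "y \<in> carrier (dicyclic_group n)"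
    "z \<in> carrier (dicyclic_group n)"
  then show "x \<otimes>\<^bsub>dicyclic_group n\<^esub> y \<otimes>\<^bsub>dicyclic_group n\<^esub> z =
    x \<otimes>\<^bsub>dicyclic_group n\<^esub> (y \<otimes>\<^bsub>dicyclic_group n\<^esub> z)"
    by (cases x; cases y; cases z) (simp add: dicyclic_mult_assoc)
qed (use assms in \<open>auto simp: dicyclic_group_def dicyclic_mult_def\<close>)

lemma order_dicyclic_group: "order (dicyclic_group n) = 4 * n"
proof -
  have "carrier (dicyclic_group n) = {..<2 * n} \<times> {..<2}"
    by (auto simp: dicyclic_group_def)
  then show ?thesis
    by (simp add: order_def card_cartesian_product)
qed

lemma dicyclic_rotation_pow:
  "(i, 0) [^]\<^bsub>dicyclic_group n\<^esub> (m :: nat) = ((m * i) mod (2 * n), 0)"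
proof (induction m)
  case 0
  then show ?case by simp
next
  case (Suc m)
  have "((m * i) mod (2 * n) + i) mod (2 * n) = (Suc m * i) mod (2 * n)"
    by (metis add.commute mod_add_left_eq mult_Suc)
  then show ?case
    using Suc by (simp add: dicyclic_mult_def)
qed

lemma ord_dicyclic_rotation:
  assumes "n > 0" "i < 2 * n"
  shows "group.ord (dicyclic_group n) (i, 0) = 2 * n div gcd (2 * n) i"
proof -
  interpret group "dicyclic_group n"
    using assms(1) by (rule group_dicyclic_group)
  have gen: "(1, 0) \<in> carrier (dicyclic_group n)"
    using assms(1) by simp
  have "(1, 0) [^]\<^bsub>dicyclic_group n\<^esub> m = \<one>\<^bsub>dicyclic_group n\<^esub> \<longleftrightarrow> 2 * n dvd m" for m :: nat
    by (simp add: dicyclic_rotation_pow dvd_eq_mod_eq_0)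
  then have ord_gen: "ord (1, 0) = 2 * n"
    using ord_unique[OF gen] by blast
  have "(i, 0) = (1, 0) [^]\<^bsub>dicyclic_group n\<^esub> i"
    using assms(2) by (simp add: dicyclic_rotation_pow)
  then have "ord (i, 0) = (if i = 0 then 1 else ord (1, 0) div gcd (ord (1, 0)) i)"
    using ord_pow_gen[OF gen, of i] by simp
  then show ?thesis
    using assms(1) ord_gen by auto
qed

lemma ord_dicyclic_reflection:
  assumes "n > 0" "i < 2 * n"
  shows "group.ord (dicyclic_group n) (i, 1) = 4"
proof -
  interpret group "dicyclic_group n"
    using assms(1) by (rule group_dicyclic_group)
  let ?x = "(i, 1)"
  have x: "?x \<in> carrier (dicyclic_group n)"
    using assms(2) by simp
  have "(3 * n) mod (2 * n) = n"
    using mod_add_self2[of n "2 * n"] assms(1) by (simp add: numeral_3_eq_3)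
  then have square: "?x [^]\<^bsub>dicyclic_group n\<^esub> (2 :: nat) = (n, 0)"
    using assms by (simp add: numeral_2_eq_2 dicyclic_mult_def)
  have "?x [^]\<^bsub>dicyclic_group n\<^esub> (2 * 2 :: nat) = \<one>\<^bsub>dicyclic_group n\<^esub>"
    using square by (simp only: nat_pow_pow[OF x, symmetric]) (simp add: dicyclic_rotation_pow)
  then have "ord ?x dvd 2 ^ 2"
    using pow_eq_id[OF x] by (simp add: power2_eq_square)
  then obtain e where e: "e \<le> 2" "ord ?x = 2 ^ e"
    using divides_primepow_nat[OF two_is_prime_nat, of "ord ?x" 2] by blast
  have "\<not> ord ?x dvd 2"
    using pow_eq_id[OF x, of 2] square assms(1) by simp
  then have "e = 2"
    using e by (auto simp: le_Suc_eq numeral_2_eq_2)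
  with e show ?thesis by simp
qed

definition clique :: "('a \<Rightarrow> 'a \<Rightarrow> bool) \<Rightarrow> 'a set \<Rightarrow> bool" where
  "clique E A \<longleftrightarrow> (\<forall>u \<in> A. \<forall>v \<in> A. u \<noteq> v \<longrightarrow> E u v)"

lemma complete_graph_not_cyclically_separable:
  assumes "clique E V"
  shows "\<not> cyclically_separable V E"
proof
  assume "cyclically_separable V E"
  then obtain S C1 C2 where C: "C1 \<in> components (V - S) E" "C2 \<in> components (V - S) E" "C1 \<noteq> C2"
    by (auto simp: cyclically_separable_def cyclic_vertex_cutset_def)
  then obtain x1 x2 where x: "x1 \<in> V - S" "C1 = {y. reach (V - S) E x1 y}"
    "x2 \<in> V - S" "C2 = {y. reach (V - S) E x2 y}"
    by (auto simp: components_def)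
  have reach_all: "reach (V - S) E u v" if "u \<in> V - S" "v \<in> V - S" for u v
  proof (cases "u = v")
    case False
    then show ?thesis
      using that assms unfolding reach_def clique_def by (intro r_into_rtranclp) auto
  qed (simp add: reach_def)
  have "C1 = C2"
    using reach_all[OF x(1,3)] reach_all[OF x(3,1)] unfolding x reach_def
    by (auto intro: rtranclp_trans)
  with C(3) show False ..
qed

lemma clique_mem_components:
  assumes "A \<subseteq> W" "x \<in> A" "clique E A" "\<forall>u \<in> A. \<forall>v \<in> W - A. \<not> E u v"
  shows "A \<in> components W E"
proof -
  have "{y. reach W E x y} \<subseteq> A"
  proof
    fix y assume "y \<in> {y. reach W E x y}"
    then have "reach W E x y" by simp
    then show "y \<in> A"
      unfolding reach_def by (induction rule: rtranclp_induct) (use assms in auto)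
  qed
  moreover have "reach W E x y" if "y \<in> A" for y
  proof (cases "y = x")
    case False
    then show ?thesis
      using that assms(1-3) unfolding reach_def clique_def by (intro r_into_rtranclp) auto
  qed (simp add: reach_def)
  ultimately show ?thesis
    using assms(1,2) unfolding components_def by blast
qed

lemma triangle_has_cycle:
  assumes "distinct [a, b, c]" "{a, b, c} \<subseteq> C" "clique E {a, b, c}"
  shows "has_cycle C E"
  unfolding has_cycle_def
proof (intro exI[of _ "[a, b, c]"] conjI)
  show "\<forall>i < length [a, b, c] - 1. E ([a, b, c] ! i) ([a, b, c] ! Suc i)"
    using assms(1,3) by (simp add: clique_def All_less_Suc)
qed (use assms in \<open>auto simp: clique_def\<close>)

lemma disjoint_triangles_cyclically_separable:
  assumes "distinct [a1, a2, a3, b1, b2, b3]" "{a1, a2, a3, b1, b2, b3} \<subseteq> V"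
    "clique E {a1, a2, a3}" "clique E {b1, b2, b3}"
    "\<forall>u \<in> {a1, a2, a3}. \<forall>v \<in> {b1, b2, b3}. \<not> E u v \<and> \<not> E v u"
  shows "cyclically_separable V E"
proof -
  let ?A = "{a1, a2, a3}" and ?B = "{b1, b2, b3}"
  let ?S = "V - (?A \<union> ?B)"
  have W: "V - ?S = ?A \<union> ?B"
    using assms(2) by auto
  have "?A \<in> components (V - ?S) E"
    unfolding W by (rule clique_mem_components[of _ _ a1]) (use assms(1,3,5) in auto)
  moreover have "?B \<in> components (V - ?S) E"
    unfolding W by (rule clique_mem_components[of _ _ b1]) (use assms(1,4,5) in auto)
  moreover have "?A \<noteq> ?B"
    using assms(1) by auto
  moreover have "has_cycle ?A E" "has_cycle ?B E"
    using assms(1,3,4) by (auto intro: triangle_has_cycle)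
  ultimately show ?thesis
    unfolding cyclically_separable_def cyclic_vertex_cutset_def by blast
qed

lemma dvd_prime_power_comparable:
  fixes a b p :: nat
  assumes "Factorial_Ring.prime p" "a dvd p ^ k" "b dvd p ^ k"
  shows "a dvd b \<or> b dvd a"
proof -
  obtain i j where "a = p ^ i" "b = p ^ j"
    using assms(2,3) unfolding divides_primepow_nat[OF assms(1)] by blast
  then show ?thesis
    by (cases "i \<le> j") (auto intro: le_imp_power_dvd)
qed

lemma odd_divisor_if_not_power_of_two:
  fixes n :: nat
  assumes "n > 0" "\<nexists>k. n = 2 ^ k"
  obtains m q where "n = m * q" "odd m" "m > 1" "q > 0"
proof -
  obtain m where m: "n = 2 ^ multiplicity 2 n * m" "odd m"
    by (rule multiplicity_decompose'[of n 2]) (use assms(1) in simp_all)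
  moreover have "m \<noteq> 1"
    using m assms(2) by auto
  then have "m > 1"
    using odd_pos[OF m(2)] by simp
  ultimately show thesis
    using that[of m "2 ^ multiplicity 2 n"] by (simp add: mult.commute)
qed

lemma dicyclic_supergraph_clique_if_power_of_two:
  assumes "n = 2 ^ k"
  shows "clique (order_supergraph_adj (dicyclic_group n)) (carrier (dicyclic_group n))"
proof -
  interpret group "dicyclic_group n"
    using assms by (intro group_dicyclic_group) simp
  have "ord x dvd 2 ^ (k + 2)" if "x \<in> carrier (dicyclic_group n)" for x
    using ord_dvd_group_order[OF that] assms by (simp add: order_dicyclic_group power_add mult.commute)
  then show ?thesis
    unfolding clique_def order_supergraph_adj_def
    using dvd_prime_power_comparable[OF two_is_prime_nat] by blast
qed

lemma dicyclic_supergraph_cyclically_separable_if_odd_divisor: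
  assumes n: "n = m * q" and m_odd: "odd m" and m_gt_1: "m > 1" and q: "q > 0"
  shows "cyclically_separable (carrier (dicyclic_group n)) (order_supergraph_adj (dicyclic_group n))"
proof -
  let ?ord = "group.ord (dicyclic_group n)"
  have "m \<ge> 3"
    using m_odd m_gt_1 by presburger
  then have bound: "4 * q < 2 * n"
    using n q by simp
  have "gcd m 2 = 1"
    using m_odd by (simp add: gcd.commute)
  then have "gcd (2 * n) (4 * q) = 2 * q"
    using gcd_mult_distrib_nat[of "2 * q" m 2] by (simp add: n ac_simps)
  moreover have "gcd (2 * n) q = q" "gcd (2 * n) (2 * q) = 2 * q"
    by (simp_all add: n)
  ultimately have ord_rotations: "?ord (q, 0) = 2 * m" "?ord (2 * q, 0) = m" "?ord (4 * q, 0) = m"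
    using bound n q by (simp_all add: ord_dicyclic_rotation)
  have ord_reflections: "?ord (j, 1) = 4" if "j \<le> 2" for j
    using that bound q by (intro ord_dicyclic_reflection) simp_all
  have "\<not> m dvd 4"
  proof
    assume "m dvd 4"
    then have "m \<le> 4"
      by (rule dvd_imp_le) simp
    with m_odd \<open>m \<ge> 3\<close> have "m = 3"
      by presburger
    with \<open>m dvd 4\<close> show False
      by simp
  qed
  then have incomparable: "\<not> 4 dvd m" "\<not> m dvd 4" "\<not> 4 dvd 2 * m" "\<not> 2 * m dvd 4"
    using m_odd dvd_trans[of m 2 4] by (auto dest: dvd_mult_right)
  show ?thesis
  proof (rule disjoint_triangles_cyclically_separable)
    show "distinct [(q, 0), (2 * q, 0), (4 * q, 0), (0, 1), (1, 1), (2 :: nat, 1 :: nat)]"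
      using q by simp
    show "{(q, 0), (2 * q, 0), (4 * q, 0), (0, 1), (1, 1), (2, 1)} \<subseteq> carrier (dicyclic_group n)"
      using bound q by auto
    show "clique (order_supergraph_adj (dicyclic_group n)) {(q, 0), (2 * q, 0), (4 * q, 0)}"
      using ord_rotations by (auto simp: clique_def order_supergraph_adj_def)
    show "clique (order_supergraph_adj (dicyclic_group n)) {(0, 1), (1, 1), (2, 1)}"
      using ord_reflections by (auto simp: clique_def order_supergraph_adj_def)
    show "\<forall>u \<in> {(q, 0), (2 * q, 0), (4 * q, 0)}. \<forall>v \<in> {(0, 1), (1, 1), (2, 1)}.
        \<not> order_supergraph_adj (dicyclic_group n) u v \<and> \<not> order_supergraph_adj (dicyclic_group n) v u"
      using ord_rotations ord_reflections incomparable by (auto simp: order_supergraph_adj_def)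
  qed
qed

theorem mainTheorem2:
  fixes n :: nat
  assumes "n \<ge> 2"
  shows "cyclically_separable (carrier (dicyclic_group n))
           (order_supergraph_adj (dicyclic_group n))
         \<longleftrightarrow> \<not> (\<exists>k. n = 2 ^ k)"
proof
  assume "cyclically_separable (carrier (dicyclic_group n)) (order_supergraph_adj (dicyclic_group n))"
  then show "\<not> (\<exists>k. n = 2 ^ k)"
    using dicyclic_supergraph_clique_if_power_of_two complete_graph_not_cyclically_separable by blast
next
  assume "\<not> (\<exists>k. n = 2 ^ k)"
  moreover have "n > 0"
    using assms by simp
  ultimately obtain m q where "n = m * q" "odd m" "m > 1" "q > 0"
    using odd_divisor_if_not_power_of_two by blast
  then show "cyclically_separable (carrier (dicyclic_group n)) (order_supergraph_adj (dicyclic_group n))"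
    by (intro dicyclic_supergraph_cyclically_separable_if_odd_divisor)
qed

end
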